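(* Let $\epsilon\in(0,1)$ and for $i=2,\dots,n$ let $0<p_i<q_i<+\infty$; write $(p,q)=(p_2,q_2)\times\cdots\times(p_n,q_n)$ and let $\psi:(0,\epsilon)\times(p,q)\to\mathbb{R}^n$, $\psi(t)=(t_1,t_1^{t_2},\dots,t_1^{t_n})$. Let $\beta\in\mathbb{Q}^n\setminus\{0\}$ be such that $\psi(t)^\beta=\prod_{i}\psi_i(t)^{\beta_i}$ is bounded on $(0,\epsilon)\times(p,q)$. Then there exist $p_i\le p'_i<q'_i\le q_i$ ($i=2,\dots,n$) such that, with $(p',q')=\prod_{i=2}^n(p'_i,q'_i)$, $\psi(t)^\beta\to0$ as $t_1\to0$ uniformly in $(t_2,\dots,t_n)\in(p',q')$. *)

theory Defs
  imports "HOL-Analysis.Analysis"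
begin

definition psi :: "real \<Rightarrow> (nat \<Rightarrow> real) \<Rightarrow> nat \<Rightarrow> real" where
  "psi t1 s i = (if i = 1 then t1 else t1 powr s i)"

definition psi_mono :: "nat \<Rightarrow> (nat \<Rightarrow> rat) \<Rightarrow> real \<Rightarrow> (nat \<Rightarrow> real) \<Rightarrow> real" where
  "psi_mono n \<beta> t1 s = (\<Prod>i\<in>{1..n}. psi t1 s i powr real_of_rat (\<beta> i))"

definition box_set :: "nat \<Rightarrow> (nat \<Rightarrow> real) \<Rightarrow> (nat \<Rightarrow> real) \<Rightarrow> (nat \<Rightarrow> real) set" where
  "box_set n p q = {s. \<forall>i\<in>{2..n}. p i < s i \<and> s i < q i}"

end

theory Submission
  imports Defs
begin

text \<open>For \<open>t\<^sub>1 > 0\<close> the monomial is \<open>t\<^sub>1 powr L(s)\<close> with an affine exponent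
  \<open>L(s) = \<beta>\<^sub>1 + \<Sum>\<^sub>i \<beta>\<^sub>i s\<^sub>i\<close>. Boundedness as \<open>t\<^sub>1 \<rightarrow> 0\<close> forces \<open>L \<ge> 0\<close> on the open box,
  hence \<open>L > 0\<close> at every interior point \<open>c\<close>: otherwise moving \<open>c\<close> in a coordinate with
  \<open>\<beta>\<^sub>j \<noteq> 0\<close> would make \<open>L\<close> negative, and if there is no such coordinate then \<open>L = \<beta>\<^sub>1 \<noteq> 0\<close>.
  On the corner of the box where each \<open>s\<^sub>i\<close> lies on the side of \<open>c\<^sub>i\<close> indicated by the sign
  of \<open>\<beta>\<^sub>i\<close> we have \<open>L \<ge> L(c) > 0\<close>, so \<open>t\<^sub>1 powr L(s) \<le> t\<^sub>1 powr L(c) \<rightarrow> 0\<close> uniformly.\<close>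

definition psi_exponent :: "nat \<Rightarrow> (nat \<Rightarrow> rat) \<Rightarrow> (nat \<Rightarrow> real) \<Rightarrow> real" where
  "psi_exponent n \<beta> s = real_of_rat (\<beta> 1) + (\<Sum>i\<in>{2..n}. real_of_rat (\<beta> i) * s i)"

lemma psi_mono_eq_powr_psi_exponent:
  assumes "1 \<le> n" "0 < t"
  shows "psi_mono n \<beta> t s = t powr psi_exponent n \<beta> s"
proof -
  have "{1..n} = insert 1 {2..n}" using assms by auto
  then have "psi_mono n \<beta> t s =
      t powr real_of_rat (\<beta> 1) * (\<Prod>i\<in>{2..n}. t powr (real_of_rat (\<beta> i) * s i))"
    unfolding psi_mono_def by (simp add: psi_def powr_powr mult.commute)
  also have "\<dots> = t powr real_of_rat (\<beta> 1) * t powr (\<Sum>i\<in>{2..n}. real_of_rat (\<beta> i) * s i)"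
    using assms by (simp add: powr_sum)
  finally show ?thesis unfolding psi_exponent_def using assms by (simp add: powr_add)
qed

lemma psi_exponent_fun_upd:
  assumes "j \<in> {2..n}"
  shows "psi_exponent n \<beta> (s(j := x)) = psi_exponent n \<beta> s + real_of_rat (\<beta> j) * (x - s j)"
proof -
  have "(\<Sum>i\<in>{2..n}. real_of_rat (\<beta> i) * (s(j := x)) i) =
      (\<Sum>i\<in>{2..n}. real_of_rat (\<beta> i) * s i + (if i = j then real_of_rat (\<beta> j) * (x - s j) else 0))"
    by (intro sum.cong) (auto simp: algebra_simps)
  also have "\<dots> = (\<Sum>i\<in>{2..n}. real_of_rat (\<beta> i) * s i) + real_of_rat (\<beta> j) * (x - s j)"
    using assms by (simp add: sum.distrib)
  finally show ?thesis unfolding psi_exponent_def by simp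
qed

lemma psi_exponent_mono:
  assumes "\<And>i. i \<in> {2..n} \<Longrightarrow> (0 \<le> \<beta> i \<longrightarrow> c i \<le> s i) \<and> (\<beta> i < 0 \<longrightarrow> s i \<le> c i)"
  shows "psi_exponent n \<beta> c \<le> psi_exponent n \<beta> s"
proof -
  have "real_of_rat (\<beta> i) * c i \<le> real_of_rat (\<beta> i) * s i" if "i \<in> {2..n}" for i
    using assms[OF that] by (cases "0 \<le> \<beta> i") (auto intro: mult_left_mono mult_left_mono_neg)
  then have "(\<Sum>i\<in>{2..n}. real_of_rat (\<beta> i) * c i) \<le> (\<Sum>i\<in>{2..n}. real_of_rat (\<beta> i) * s i)"
    by (rule sum_mono)
  then show ?thesis unfolding psi_exponent_def by simp
qed

lemma powr_bounded_at_right_0_imp_nonneg: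
  fixes a M :: real
  assumes "0 < \<epsilon>" and bound: "\<forall>t\<in>{0<..<\<epsilon>}. t powr a \<le> M"
  shows "0 \<le> a"
proof (rule ccontr)
  assume "\<not> 0 \<le> a"
  then have a: "a < 0" by simp
  define x where "x = (max M 1 + 1) powr (1 / a)"
  define t where "t = min (\<epsilon> / 2) x"
  have "0 < x" unfolding x_def by simp
  then have t: "t \<in> {0<..<\<epsilon>}" "t \<le> x" using assms(1) unfolding t_def by auto
  have "max M 1 + 1 = x powr a" unfolding x_def using a by (simp add: powr_powr)
  also have "\<dots> \<le> t powr a" using t a by (intro powr_mono2') auto
  also have "\<dots> \<le> M" using bound t by blast
  finally show False by simp
qed

lemma psi_exponent_nonneg_on_box:
  assumes "0 < \<epsilon>" "1 \<le> n"
    and "\<forall>t\<in>{0<..<\<epsilon>}. \<forall>s\<in>box_set n p q. \<bar>psi_mono n \<beta> t s\<bar> \<le> M"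
    and "s \<in> box_set n p q"
  shows "0 \<le> psi_exponent n \<beta> s"
proof (rule powr_bounded_at_right_0_imp_nonneg[OF assms(1)], intro ballI)
  fix t assume t: "t \<in> {0<..<\<epsilon>}"
  then have "\<bar>psi_mono n \<beta> t s\<bar> \<le> M" using assms(3,4) by blast
  then show "t powr psi_exponent n \<beta> s \<le> M"
    using t by (simp add: psi_mono_eq_powr_psi_exponent[OF assms(2)])
qed

lemma psi_exponent_pos_in_box:
  assumes nonneg: "\<forall>s\<in>box_set n p q. 0 \<le> psi_exponent n \<beta> s"
    and "\<exists>i\<in>{1..n}. \<beta> i \<noteq> 0" and c: "c \<in> box_set n p q"
  shows "0 < psi_exponent n \<beta> c"
proof (cases "\<exists>j\<in>{2..n}. \<beta> j \<noteq> 0")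
  case True
  then obtain j where j: "j \<in> {2..n}" "\<beta> j \<noteq> 0" by blast
  define x where "x = (if \<beta> j > 0 then (p j + c j) / 2 else (c j + q j) / 2)"
  have "p j < c j" "c j < q j" using c j(1) unfolding box_set_def by auto
  then have "p j < x" "x < q j" "real_of_rat (\<beta> j) * (x - c j) < 0"
    using j(2) unfolding x_def by (auto simp: mult_less_0_iff)
  moreover have "c(j := x) \<in> box_set n p q"
    using c \<open>p j < x\<close> \<open>x < q j\<close> unfolding box_set_def by auto
  ultimately show ?thesis
    using nonneg c psi_exponent_fun_upd[OF j(1), of \<beta> c x] by fastforce
next
  case False
  obtain i where i: "i \<in> {1..n}" "\<beta> i \<noteq> 0" using assms(2) by blast
  with False have "i = 1" by fastforce
  with i have "\<beta> 1 \<noteq> 0" by simp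
  moreover have "psi_exponent n \<beta> c = real_of_rat (\<beta> 1)"
    using False unfolding psi_exponent_def by simp
  ultimately show ?thesis using nonneg c by fastforce
qed

lemma uniform_limit_powr_at_right_0:
  fixes L :: "'a \<Rightarrow> real"
  assumes "0 < \<delta>" "\<forall>x\<in>S. \<delta> \<le> L x"
  shows "uniform_limit S (\<lambda>t x. t powr L x) (\<lambda>x. 0) (at_right 0)"
  unfolding uniform_limit_iff
proof (intro allI impI)
  fix e :: real assume "0 < e"
  have "((\<lambda>t. t powr \<delta>) \<longlongrightarrow> 0) (at_right 0)"
    using assms(1) by (intro tendsto_zero_powrI)
      (auto intro: tendsto_ident_at eventually_mono[OF eventually_at_right_less])
  then have "\<forall>\<^sub>F t in at_right 0. t powr \<delta> < e"
    using \<open>0 < e\<close> by (simp add: order_tendstoD(2))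
  moreover have "\<forall>\<^sub>F t in at_right (0::real). 0 < t \<and> t < 1"
    unfolding eventually_at_right_field by (intro exI[of _ 1]) auto
  ultimately show "\<forall>\<^sub>F t in at_right 0. \<forall>x\<in>S. dist (t powr L x) 0 < e"
  proof eventually_elim
    case (elim t)
    show ?case
    proof
      fix x assume "x \<in> S"
      then have "t powr L x \<le> t powr \<delta>" using elim assms(2) by (intro powr_mono') auto
      then show "dist (t powr L x) 0 < e" using elim by simp
    qed
  qed
qed

theorem lemma4p4:
  fixes n :: nat and \<epsilon> :: real and p q :: "nat \<Rightarrow> real" and \<beta> :: "nat \<Rightarrow> rat"
  assumes "0 < \<epsilon>" and "\<epsilon> < 1"
    and "\<forall>i\<in>{2..n}. 0 < p i \<and> p i < q i"
    and "\<exists>i\<in>{1..n}. \<beta> i \<noteq> 0"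
    and "\<exists>M. \<forall>t1\<in>{0<..<\<epsilon>}. \<forall>s\<in>box_set n p q. \<bar>psi_mono n \<beta> t1 s\<bar> \<le> M"
  shows "\<exists>p' q'. (\<forall>i\<in>{2..n}. p i \<le> p' i \<and> p' i < q' i \<and> q' i \<le> q i) \<and>
           uniform_limit (box_set n p' q') (\<lambda>t1 s. psi_mono n \<beta> t1 s) (\<lambda>s. 0) (at_right 0)"
proof -
  have n: "1 \<le> n" using assms(4) by auto
  have nonneg: "\<forall>s\<in>box_set n p q. 0 \<le> psi_exponent n \<beta> s"
    using assms(5) psi_exponent_nonneg_on_box[OF assms(1) n] by blast
  define c where "c i = (p i + q i) / 2" for i
  have "c \<in> box_set n p q" using assms(3) unfolding box_set_def c_def by auto
  then have pos: "0 < psi_exponent n \<beta> c" using psi_exponent_pos_in_box nonneg assms(4) by blast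
  define p' where "p' i = (if 0 \<le> \<beta> i then c i else p i)" for i
  define q' where "q' i = (if 0 \<le> \<beta> i then q i else c i)" for i
  have sub: "\<forall>i\<in>{2..n}. p i \<le> p' i \<and> p' i < q' i \<and> q' i \<le> q i"
    using assms(3) unfolding p'_def q'_def c_def by auto
  have "psi_exponent n \<beta> c \<le> psi_exponent n \<beta> s" if "s \<in> box_set n p' q'" for s
    using that unfolding box_set_def p'_def q'_def by (intro psi_exponent_mono) force
  then have "uniform_limit (box_set n p' q') (\<lambda>t s. t powr psi_exponent n \<beta> s) (\<lambda>s. 0) (at_right 0)"
    by (intro uniform_limit_powr_at_right_0[OF pos]) blast
  moreover have "\<forall>\<^sub>F t in at_right 0. \<forall>s\<in>box_set n p' q'.
      psi_mono n \<beta> t s = t powr psi_exponent n \<beta> s"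
    using eventually_at_right_less by eventually_elim (simp add: psi_mono_eq_powr_psi_exponent[OF n])
  then have "uniform_limit (box_set n p' q') (\<lambda>t s. psi_mono n \<beta> t s) (\<lambda>s. 0) (at_right 0) \<longleftrightarrow>
      uniform_limit (box_set n p' q') (\<lambda>t s. t powr psi_exponent n \<beta> s) (\<lambda>s. 0) (at_right 0)"
    by (rule uniform_limit_cong) simp
  ultimately show ?thesis using sub by blast
qed

end
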